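(* Let $k=k(n)$ and $m=m(n)$ be functions of $n$ such that $m\geq n$ and $\liminf_{n\rightarrow\infty} \frac{k^2n}{m\log n}>1$. Then asymptotically almost surely $G(n,m,k)$ contains no connected component of size $s$ with $m/k< s\leq n/2$.
   Context: The uniform random intersection graph $G(n,m,k)$ (for positive integers $k\le m$) is the random graph on a set $V$ of $n$ nodes defined as follows: fix a set $M$ of $m$ colours; to each node $v\in V$ assign a subset $F_v\subseteq M$ of exactly $k$ distinct colours, chosen uniformly at random among all $k$-subsets of $M$, independently for different nodes; distinct nodes $u,v$ are joined by an edge if and only if $F_u\cap F_v\neq\emptyset$. An event holds asymptotically almost surely if its probability tends to $1$ as $n\rightarrow\infty$. Here $\log$ denotes the natural logarithm. *)

theory Defs
  imports "HOL-Probability.Probability"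
begin

text \<open>G(n,m,k) is the uniform distribution over all such assignments
(equivalently: independent uniform k-subsets for each node).\<close>

definition ksubsets :: "nat \<Rightarrow> nat \<Rightarrow> nat set set" where
  "ksubsets m k = {S. S \<subseteq> {0..<m} \<and> card S = k}"

definition assignments :: "nat \<Rightarrow> nat \<Rightarrow> nat \<Rightarrow> (nat \<Rightarrow> nat set) set" where
  "assignments n m k = {0..<n} \<rightarrow>\<^sub>E ksubsets m k"

definition G_nmk :: "nat \<Rightarrow> nat \<Rightarrow> nat \<Rightarrow> (nat \<Rightarrow> nat set) pmf" where
  "G_nmk n m k = pmf_of_set (assignments n m k)"

definition ig_edge :: "nat \<Rightarrow> (nat \<Rightarrow> nat set) \<Rightarrow> nat \<Rightarrow> nat \<Rightarrow> bool" where
  "ig_edge n F u v \<longleftrightarrow> u < n \<and> v < n \<and> u \<noteq> v \<and> F u \<inter> F v \<noteq> {}"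

definition component :: "nat \<Rightarrow> (nat \<Rightarrow> nat set) \<Rightarrow> nat \<Rightarrow> nat set" where
  "component n F v = {u. u < n \<and> (ig_edge n F)\<^sup>*\<^sup>* v u}"

definition has_mid_component :: "nat \<Rightarrow> nat \<Rightarrow> nat \<Rightarrow> (nat \<Rightarrow> nat set) \<Rightarrow> bool" where
  "has_mid_component n m k F \<longleftrightarrow>
     (\<exists>v<n. real m / real k < real (card (component n F v))
            \<and> real (card (component n F v)) \<le> real n / 2)"

end

theory Submission
  imports Defs
begin

text \<open>
  A component \<open>S\<close> with \<open>m/k < |S| \<le> n/2\<close> shares no colour with the other nodes. Let \<open>U\<close> be
  the union of the colour sets of \<open>S\<close>. Either \<open>|U| \<le> m/8\<close>: then all \<open>k|S| > m\<close> colour choices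
  of \<open>S\<close> fall into one of at most \<open>2^m\<close> sets of size \<open>m/8\<close>, which has probability at most
  \<open>2^m 8^(-m) = 4^(-m)\<close>. Or \<open>|U| > m/8\<close>, and each of the \<open>n - |S| \<ge> n/2\<close> other nodes must
  avoid \<open>U\<close>, which has probability at most \<open>(7/8)^(kn/2)\<close>. A union bound over the at most
  \<open>2^n\<close> candidate sets \<open>S\<close> gives a failure probability tending to zero as soon as \<open>k \<ge> 12\<close>
  and \<open>m \<ge> n\<close>. The hypothesis on \<open>k^2 n / (m log n)\<close> is only used to get \<open>k^2 > log n\<close>,
  hence \<open>k \<ge> 12\<close> eventually.
\<close>

lemma finite_card_subsets: "finite W \<Longrightarrow> finite {X. X \<subseteq> W \<and> card X = k}"
  by (rule finite_subset[of _ "Pow W"]) auto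

lemma finite_ksubsets: "finite (ksubsets m k)"
  unfolding ksubsets_def by (simp add: finite_card_subsets)

lemma card_ksubsets: "card (ksubsets m k) = m choose k"
  unfolding ksubsets_def using n_subsets[of "{0..<m}" k] by simp

lemma finite_assignments: "finite (assignments n m k)"
  unfolding assignments_def by (simp add: finite_PiE finite_ksubsets)

lemma card_assignments: "card (assignments n m k) = (m choose k) ^ n"
  unfolding assignments_def by (simp add: card_PiE card_ksubsets)

lemma assignments_nonempty: "k \<le> m \<Longrightarrow> assignments n m k \<noteq> {}"
  unfolding assignments_def PiE_eq_empty_iff ksubsets_def
  by (auto intro!: exI[of _ "{0..<k}"])

lemma card_PiE_if:
  assumes "finite I" "S \<subseteq> I"
  shows "card (PiE I (\<lambda>u. if u \<in> S then A u else B)) = (\<Prod>u\<in>S. card (A u)) * card B ^ card (I - S)"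
proof -
  have "card (PiE I (\<lambda>u. if u \<in> S then A u else B)) = (\<Prod>u\<in>I. if u \<in> S then card (A u) else card B)"
    using assms(1) by (simp add: card_PiE if_distrib)
  also have "\<dots> = (\<Prod>u\<in>I \<inter> {u. u \<in> S}. card (A u)) * (\<Prod>u\<in>I \<inter> - {u. u \<in> S}. card B)"
    using assms(1) by (rule prod.If_cases)
  also have "I \<inter> {u. u \<in> S} = S" using assms(2) by auto
  also have "I \<inter> - {u. u \<in> S} = I - S" by auto
  finally show ?thesis by simp
qed

lemma card_le_cover:
  assumes "finite I" "X \<subseteq> (\<Union>i\<in>I. C i)"
    and "\<And>i. i \<in> I \<Longrightarrow> finite (C i)" "\<And>i. i \<in> I \<Longrightarrow> real (card (C i)) \<le> c"
  shows "real (card X) \<le> real (card I) * c"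
proof -
  have "card X \<le> card (\<Union>i\<in>I. C i)"
    using assms(1-3) by (intro card_mono) auto
  also have "\<dots> \<le> (\<Sum>i\<in>I. card (C i))" using assms(1) by (rule card_UN_le)
  finally have "real (card X) \<le> (\<Sum>i\<in>I. real (card (C i)))" by (simp flip: of_nat_sum)
  also have "\<dots> \<le> (\<Sum>i\<in>I. c)" using assms(4) by (rule sum_mono)
  finally show ?thesis by simp
qed

lemma binomial_le_ratio_power:
  fixes a m k :: nat
  assumes "a \<le> m" "0 < m"
  shows "real (a choose k) \<le> (real a / real m) ^ k * real (m choose k)"
proof (induction k)
  case 0 then show ?case by simp
next
  case (Suc k)
  have step: "real (Suc k) * real (b choose Suc k) = real (b - k) * real (b choose k)" for b
    using binomial_absorption[of k b] binomial_absorb_comp[of b k] by (metis of_nat_mult)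
  have ratio: "real (a - k) \<le> real a / real m * real (m - k)"
  proof (cases "k \<le> a")
    case True
    have "real a * real k \<le> real m * real k" using assms(1) by (simp add: mult_right_mono)
    then show ?thesis using True assms by (simp add: of_nat_diff field_simps)
  qed (use assms in simp)
  have "real (Suc k) * real (a choose Suc k) \<le> real (a - k) * ((real a / real m) ^ k * real (m choose k))"
    using step[of a] Suc.IH by (simp add: mult_left_mono)
  also have "\<dots> \<le> real a / real m * real (m - k) * ((real a / real m) ^ k * real (m choose k))"
    using ratio by (intro mult_right_mono) auto
  also have "\<dots> = (real a / real m) ^ Suc k * (real (m - k) * real (m choose k))"
    by (simp add: algebra_simps)
  also have "\<dots> = real (Suc k) * ((real a / real m) ^ Suc k * real (m choose Suc k))"
    using step[of m] by (metis mult.left_commute)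
  finally show ?case by (simp only: mult_le_cancel_left_pos of_nat_0_less_iff zero_less_Suc)
qed

definition isolated_assignments :: "nat \<Rightarrow> nat \<Rightarrow> nat \<Rightarrow> nat set \<Rightarrow> (nat \<Rightarrow> nat set) set" where
  "isolated_assignments n m k S =
     {F \<in> assignments n m k. \<forall>u\<in>S. \<forall>w\<in>{0..<n} - S. F u \<inter> F w = {}}"

lemma component_subset: "component n F v \<subseteq> {0..<n}"
  unfolding component_def by auto

lemma component_colours_disjoint:
  assumes "u \<in> component n F v" "w < n" "w \<notin> component n F v"
  shows "F u \<inter> F w = {}"
proof (rule ccontr)
  assume "F u \<inter> F w \<noteq> {}"
  moreover have "u < n" "(ig_edge n F)\<^sup>*\<^sup>* v u" using assms(1) unfolding component_def by auto
  moreover have "u \<noteq> w" using assms by auto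
  ultimately have "ig_edge n F u w" using assms(2) unfolding ig_edge_def by auto
  then have "(ig_edge n F)\<^sup>*\<^sup>* v w" using \<open>(ig_edge n F)\<^sup>*\<^sup>* v u\<close> by simp
  then show False using assms(2,3) unfolding component_def by auto
qed

lemma has_mid_component_imp_isolated:
  assumes "F \<in> assignments n m k" "has_mid_component n m k F" "1 \<le> k"
  obtains S where "S \<subseteq> {0..<n}" "m < k * card S" "2 * card S \<le> n" "F \<in> isolated_assignments n m k S"
proof -
  obtain v where v: "real m / real k < real (card (component n F v))"
      "real (card (component n F v)) \<le> real n / 2"
    using assms(2) unfolding has_mid_component_def by blast
  have "real m < real (k * card (component n F v))"
    using v(1) assms(3) by (simp add: divide_less_eq mult.commute)
  moreover have "2 * card (component n F v) \<le> n" using v(2) by linarith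
  moreover have "F \<in> isolated_assignments n m k (component n F v)"
    using assms(1) component_colours_disjoint unfolding isolated_assignments_def by auto
  ultimately show thesis using component_subset that by (meson of_nat_less_iff)
qed

lemma card_small_colour_union_le:
  assumes S: "S \<subseteq> {0..<n}" and mk: "m \<le> k * card S" and m: "0 < m"
  shows "real (card {F \<in> assignments n m k. 8 * card (\<Union>(F ` S)) \<le> m})
          \<le> (1/4) ^ m * real (card (assignments n m k))"
proof -
  define Ws where "Ws = {W. W \<subseteq> {0..<m} \<and> 8 * card W \<le> m}"
  define C where "C W = PiE {0..<n} (\<lambda>u. if u \<in> S then {X. X \<subseteq> W \<and> card X = k} else ksubsets m k)" for W
  have cover: "{F \<in> assignments n m k. 8 * card (\<Union>(F ` S)) \<le> m} \<subseteq> (\<Union>W\<in>Ws. C W)"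
  proof
    fix F assume F: "F \<in> {F \<in> assignments n m k. 8 * card (\<Union>(F ` S)) \<le> m}"
    then have "\<Union>(F ` S) \<in> Ws" using S unfolding Ws_def assignments_def ksubsets_def by (force simp: PiE_iff)
    moreover have "F \<in> C (\<Union>(F ` S))" using F unfolding C_def assignments_def ksubsets_def by (auto simp: PiE_iff)
    ultimately show "F \<in> (\<Union>W\<in>Ws. C W)" by blast
  qed
  have Ws_Pow: "Ws \<subseteq> Pow {0..<m}" unfolding Ws_def by auto
  then have finite_Ws: "finite Ws" by (rule finite_subset) simp
  have card_Ws: "card Ws \<le> 2 ^ m"
    using card_mono[OF _ Ws_Pow] card_Pow[of "{0..<m}"] by simp
  have card_C: "real (card (C W)) \<le> (1/8) ^ m * real (card (assignments n m k))" if "W \<in> Ws" for W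
  proof -
    have W: "finite W" "card W \<le> m" "8 * card W \<le> m"
      using that card_mono[of "{0..<m}" W] unfolding Ws_def by (auto intro: finite_subset)
    have binom: "real (card W choose k) \<le> (1/8) ^ k * real (m choose k)"
      using W(3) m
      by (intro order.trans[OF binomial_le_ratio_power[OF W(2) m]] mult_right_mono power_mono)
        (auto simp: field_simps)
    have "card (C W) = (card W choose k) ^ card S * (m choose k) ^ (n - card S)"
      unfolding C_def using S W(1)
      by (simp add: card_PiE_if n_subsets card_ksubsets card_Diff_subset finite_subset)
    then have "real (card (C W)) \<le> ((1/8) ^ k * real (m choose k)) ^ card S * real (m choose k) ^ (n - card S)"
      using binom by (simp add: power_mono mult_right_mono)
    also have "\<dots> = (1/8) ^ (k * card S) * real (m choose k) ^ n"
      using card_mono[OF _ S] by (simp add: power_mult_distrib power_mult flip: power_add)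
    also have "\<dots> \<le> (1/8) ^ m * real (card (assignments n m k))"
      using mk by (simp add: card_assignments power_decreasing mult_right_mono)
    finally show ?thesis .
  qed
  have "real (card {F \<in> assignments n m k. 8 * card (\<Union>(F ` S)) \<le> m})
      \<le> real (card Ws) * ((1/8) ^ m * real (card (assignments n m k)))"
    by (rule card_le_cover[OF finite_Ws cover _ card_C])
      (auto simp: C_def Ws_def finite_subset finite_card_subsets finite_ksubsets intro!: finite_PiE)
  also have "\<dots> \<le> 2 ^ m * ((1/8) ^ m * real (card (assignments n m k)))"
    using card_Ws by (intro mult_right_mono) (auto simp: numeral_power_le_of_nat_cancel_iff)
  also have "\<dots> = (2 * (1/8)) ^ m * real (card (assignments n m k))"
    by (simp only: power_mult_distrib mult.assoc)
  finally show ?thesis by simp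
qed

lemma card_large_colour_union_avoided_le:
  assumes S: "S \<subseteq> {0..<n}" and m: "0 < m"
  shows "real (card {F \<in> assignments n m k. m < 8 * card (\<Union>(F ` S)) \<and>
             (\<forall>w\<in>{0..<n} - S. F w \<inter> \<Union>(F ` S) = {})})
         \<le> (7/8) ^ (k * (n - card S)) * real (card (assignments n m k))"
proof -
  \<comment> \<open>Covering by the restriction of \<open>F\<close> to \<open>S\<close> rather than by the colour union avoids a
      factor \<open>2^m\<close>, which \<open>(7/8)^(k(n - |S|))\<close> could not absorb when \<open>m\<close> is much larger than \<open>n\<close>.\<close>
  define P where "P = {G \<in> S \<rightarrow>\<^sub>E ksubsets m k. m < 8 * card (\<Union>(G ` S))}"
  define C where "C G = PiE {0..<n} (\<lambda>u. if u \<in> S then {G u}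
                          else {X. X \<subseteq> {0..<m} - \<Union>(G ` S) \<and> card X = k})" for G
  have cover: "{F \<in> assignments n m k. m < 8 * card (\<Union>(F ` S)) \<and>
             (\<forall>w\<in>{0..<n} - S. F w \<inter> \<Union>(F ` S) = {})} \<subseteq> (\<Union>G\<in>P. C G)"
  proof
    fix F assume F: "F \<in> {F \<in> assignments n m k. m < 8 * card (\<Union>(F ` S)) \<and>
             (\<forall>w\<in>{0..<n} - S. F w \<inter> \<Union>(F ` S) = {})}"
    have image: "restrict F S ` S = F ` S" by auto
    have "restrict F S \<in> P" unfolding P_def image using F S by (auto simp: assignments_def)
    moreover have "F \<in> C (restrict F S)"
      unfolding C_def image using F by (force simp: assignments_def ksubsets_def PiE_iff)
    ultimately show "F \<in> (\<Union>G\<in>P. C G)" by blast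
  qed
  have finite_S: "finite S" using S finite_subset by blast
  have P_subset: "P \<subseteq> S \<rightarrow>\<^sub>E ksubsets m k" unfolding P_def by auto
  have finite_P: "finite P"
    using P_subset finite_S by (blast intro: finite_subset finite_PiE finite_ksubsets)
  have card_P: "card P \<le> (m choose k) ^ card S"
    using card_mono[OF _ P_subset] finite_S by (simp add: card_PiE card_ksubsets finite_PiE finite_ksubsets)
  have card_C: "real (card (C G)) \<le> (7/8) ^ (k * (n - card S)) * real (m choose k) ^ (n - card S)"
    if "G \<in> P" for G
  proof -
    let ?U = "\<Union>(G ` S)"
    have U: "?U \<subseteq> {0..<m}" "m < 8 * card ?U"
      using that unfolding P_def ksubsets_def by (auto simp: PiE_iff)
    have "card ?U \<le> m" using card_mono[OF _ U(1)] by simp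
    have binom: "real ((m - card ?U) choose k) \<le> (7/8) ^ k * real (m choose k)"
      using U(2) \<open>card ?U \<le> m\<close> m
      by (intro order.trans[OF binomial_le_ratio_power[of "m - card ?U" m k]] mult_right_mono power_mono)
        (auto simp: field_simps of_nat_diff)
    have "card (C G) = ((m - card ?U) choose k) ^ (n - card S)"
      unfolding C_def using S finite_S U(1)
      by (simp add: card_PiE_if n_subsets card_Diff_subset finite_subset)
    then have "real (card (C G)) \<le> ((7/8) ^ k * real (m choose k)) ^ (n - card S)"
      using binom by (simp add: power_mono)
    then show ?thesis by (simp add: power_mult_distrib power_mult)
  qed
  have "real (card {F \<in> assignments n m k. m < 8 * card (\<Union>(F ` S)) \<and>
             (\<forall>w\<in>{0..<n} - S. F w \<inter> \<Union>(F ` S) = {})})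
      \<le> real (card P) * ((7/8) ^ (k * (n - card S)) * real (m choose k) ^ (n - card S))"
    by (rule card_le_cover[OF finite_P cover _ card_C]) (auto simp: C_def finite_card_subsets intro!: finite_PiE)
  also have "\<dots> \<le> real (m choose k) ^ card S * ((7/8) ^ (k * (n - card S)) * real (m choose k) ^ (n - card S))"
    using card_P by (intro mult_right_mono) (auto simp flip: of_nat_power)
  also have "\<dots> = (7/8) ^ (k * (n - card S)) * real (card (assignments n m k))"
    using card_mono[OF _ S] by (simp add: card_assignments algebra_simps flip: power_add)
  finally show ?thesis .
qed

lemma card_isolated_assignments_le:
  assumes S: "S \<subseteq> {0..<n}" and "m < k * card S" "2 * card S \<le> n" "12 \<le> k" "n \<le> m"
  shows "real (card (isolated_assignments n m k S))
           \<le> ((1/4) ^ n + (7/8) ^ (6 * n)) * real (card (assignments n m k))"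
proof -
  let ?A = "assignments n m k"
  let ?small = "{F \<in> ?A. 8 * card (\<Union>(F ` S)) \<le> m}"
  let ?avoided = "{F \<in> ?A. m < 8 * card (\<Union>(F ` S)) \<and> (\<forall>w\<in>{0..<n} - S. F w \<inter> \<Union>(F ` S) = {})}"
  have "0 < card S" using assms(2) by (cases "card S") auto
  then have m: "0 < m" using card_mono[OF _ S] assms(5) by simp
  have "isolated_assignments n m k S \<subseteq> ?small \<union> ?avoided"
    unfolding isolated_assignments_def by auto
  then have "card (isolated_assignments n m k S) \<le> card (?small \<union> ?avoided)"
    by (intro card_mono) (simp_all add: finite_assignments)
  also have "\<dots> \<le> card ?small + card ?avoided" by (rule card_Un_le)
  finally have "real (card (isolated_assignments n m k S)) \<le> real (card ?small) + real (card ?avoided)"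
    by linarith
  also have "\<dots> \<le> (1/4) ^ m * real (card ?A) + (7/8) ^ (k * (n - card S)) * real (card ?A)"
    using card_small_colour_union_le[OF S _ m] card_large_colour_union_avoided_le[OF S m] assms(2)
    by (intro add_mono) simp_all
  also have "\<dots> \<le> (1/4) ^ n * real (card ?A) + (7/8) ^ (6 * n) * real (card ?A)"
  proof (intro add_mono mult_right_mono power_decreasing)
    have "6 * n \<le> 12 * (n - card S)" using assms(3) by linarith
    also have "\<dots> \<le> k * (n - card S)" using assms(4) by (rule mult_le_mono1)
    finally show "6 * n \<le> k * (n - card S)" .
  qed (use assms(5) in simp_all)
  finally show ?thesis by (simp add: algebra_simps)
qed

lemma card_has_mid_component_le:
  assumes "n \<le> m" "12 \<le> k"
  shows "real (card {F \<in> assignments n m k. has_mid_component n m k F})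
           \<le> 2 ^ n * (((1/4) ^ n + (7/8) ^ (6 * n)) * real (card (assignments n m k)))"
proof -
  define SS where "SS = {S. S \<subseteq> {0..<n} \<and> m < k * card S \<and> 2 * card S \<le> n}"
  have "1 \<le> k" using assms(2) by simp
  have SS_Pow: "SS \<subseteq> Pow {0..<n}" unfolding SS_def by auto
  have finite_SS: "finite SS" using SS_Pow finite_subset by blast
  have cover: "{F \<in> assignments n m k. has_mid_component n m k F} \<subseteq> (\<Union>S\<in>SS. isolated_assignments n m k S)"
  proof
    fix F assume "F \<in> {F \<in> assignments n m k. has_mid_component n m k F}"
    then have "F \<in> assignments n m k" "has_mid_component n m k F" by auto
    then obtain S where "S \<subseteq> {0..<n}" "m < k * card S" "2 * card S \<le> n" "F \<in> isolated_assignments n m k S"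
      using \<open>1 \<le> k\<close> by (rule has_mid_component_imp_isolated)
    then show "F \<in> (\<Union>S\<in>SS. isolated_assignments n m k S)" unfolding SS_def by blast
  qed
  have finite_isolated: "finite (isolated_assignments n m k S)" for S
    unfolding isolated_assignments_def using finite_assignments by simp
  have "real (card {F \<in> assignments n m k. has_mid_component n m k F})
      \<le> real (card SS) * (((1/4) ^ n + (7/8) ^ (6 * n)) * real (card (assignments n m k)))"
    by (rule card_le_cover[OF finite_SS cover finite_isolated])
      (use card_isolated_assignments_le assms in \<open>simp add: SS_def\<close>)
  also have "\<dots> \<le> 2 ^ n * (((1/4) ^ n + (7/8) ^ (6 * n)) * real (card (assignments n m k)))"
    using card_mono[OF _ SS_Pow] card_Pow[of "{0..<n}"]
    by (intro mult_right_mono) (auto simp: numeral_power_le_of_nat_cancel_iff)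
  finally show ?thesis .
qed

lemma prob_no_mid_component_ge:
  assumes "k \<le> m" "n \<le> m" "12 \<le> k"
  shows "1 - 2 ^ n * ((1/4) ^ n + (7/8) ^ (6 * n))
           \<le> measure_pmf.prob (G_nmk n m k) {F. \<not> has_mid_component n m k F}"
proof -
  let ?A = "assignments n m k"
  have A: "finite ?A" "?A \<noteq> {}" using finite_assignments assignments_nonempty[OF assms(1)] by auto
  then have "0 < real (card ?A)" by (simp add: card_gt_0_iff)
  have "measure_pmf.prob (G_nmk n m k) {F. has_mid_component n m k F}
      = real (card {F \<in> ?A. has_mid_component n m k F}) / real (card ?A)"
    unfolding G_nmk_def using A by (simp add: measure_pmf_of_set Int_def)
  also have "\<dots> \<le> 2 ^ n * ((1/4) ^ n + (7/8) ^ (6 * n))"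
    using card_has_mid_component_le[OF assms(2,3)] \<open>0 < real (card ?A)\<close> by (simp add: divide_le_eq)
  finally show ?thesis
    using measure_pmf.prob_compl[of "{F. has_mid_component n m k F}" "G_nmk n m k"]
    by (simp add: Compl_eq_Diff_UNIV[symmetric] Collect_neg_eq)
qed

lemma union_bound_tendsto_zero: "(\<lambda>n. 2 ^ n * ((1/4) ^ n + (7/8) ^ (6 * n)) :: real) \<longlonglongrightarrow> 0"
proof -
  have "(\<lambda>n. (1/2) ^ n + (2 * (7/8) ^ 6) ^ n :: real) \<longlonglongrightarrow> 0 + 0"
    by (intro tendsto_add LIMSEQ_power_zero) (simp_all add: power_divide)
  moreover have "(2::real) ^ n * ((1/4) ^ n + (7/8) ^ (6 * n)) = (1/2) ^ n + (2 * (7/8) ^ 6) ^ n" for n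
    unfolding distrib_left power_mult power_mult_distrib[symmetric] by simp
  ultimately show ?thesis by simp
qed

lemma eventually_ln_less_square:
  fixes k m :: "nat \<Rightarrow> nat"
  assumes "\<And>n. n \<le> m n"
    and "liminf (\<lambda>n. ereal (real (k n) ^ 2 * real n / (real (m n) * ln (real n)))) > 1"
  shows "eventually (\<lambda>n. ln (real n) < real (k n) ^ 2) sequentially"
  using less_LiminfD[OF assms(2)] eventually_ge_at_top[of 2]
proof eventually_elim
  case (elim n)
  have "0 < ln (real n)" "real n \<le> real (m n)" using elim(2) assms(1)[of n] by simp_all
  then have "real n * ln (real n) \<le> real (m n) * ln (real n)" by (simp add: mult_right_mono)
  also have "\<dots> < real (k n) ^ 2 * real n"
    using elim(1) \<open>0 < ln (real n)\<close> \<open>real n \<le> real (m n)\<close> elim(2)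
    by (simp add: less_divide_eq)
  finally show ?case using elim(2) by (simp add: mult.commute)
qed

theorem lemma8:
  fixes k m :: "nat \<Rightarrow> nat"
  assumes "\<And>n. 1 \<le> k n" and "\<And>n. k n \<le> m n" and "\<And>n. n \<le> m n"
    and "liminf (\<lambda>n. ereal (real (k n) ^ 2 * real n / (real (m n) * ln (real n)))) > 1"
  shows "(\<lambda>n. measure_pmf.prob (G_nmk n (m n) (k n))
                {F. \<not> has_mid_component n (m n) (k n) F}) \<longlonglongrightarrow> 1"
proof -
  have "filterlim (\<lambda>n. ln (real n)) at_top sequentially"
    by (rule filterlim_compose[OF ln_at_top filterlim_real_sequentially])
  then have "eventually (\<lambda>n. 12 ^ 2 \<le> ln (real n)) sequentially"
    by (simp add: filterlim_at_top)
  with eventually_ln_less_square[OF assms(3,4)] have "eventually (\<lambda>n. 12 \<le> k n) sequentially"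
  proof eventually_elim
    case (elim n)
    then have "(12::real) ^ 2 < real (k n) ^ 2" by linarith
    then show "12 \<le> k n" using power_less_imp_less_base[of 12 2 "real (k n)"] by simp
  qed
  then have lower: "eventually (\<lambda>n. 1 - 2 ^ n * ((1/4) ^ n + (7/8) ^ (6 * n))
      \<le> measure_pmf.prob (G_nmk n (m n) (k n)) {F. \<not> has_mid_component n (m n) (k n) F}) sequentially"
    by eventually_elim (rule prob_no_mid_component_ge[OF assms(2,3)])
  have upper: "eventually (\<lambda>n. measure_pmf.prob (G_nmk n (m n) (k n))
      {F. \<not> has_mid_component n (m n) (k n) F} \<le> 1) sequentially"
    by (simp add: measure_pmf.prob_le_1)
  have "(\<lambda>n. 1 - 2 ^ n * ((1/4) ^ n + (7/8) ^ (6 * n)) :: real) \<longlonglongrightarrow> 1"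
    using tendsto_diff[OF tendsto_const union_bound_tendsto_zero, of 1] by simp
  from tendsto_sandwich[OF lower upper this tendsto_const] show ?thesis .
qed

end
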